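(* Let $N>K$ and let $\mathbf{d}_u=(d_1,\dots,d_K)$ be a demand vector with pairwise distinct entries. Let the cache configuration $\mathcal{C}$ be produced by the old placement scheme with $F$ packets per file, and let $t=KM/N$. If $$F\le \frac{N/M}{2K}\left(1-\frac{1}{N/M}\right)\exp\!\left(2t\Big(1-\frac{t}{K}\Big)\Big(1-\frac1K\Big)\right),$$ then $$\mathbb{E}\big[R^{nd}(\mathcal{C},\mathbf{d}_u)\big]\ge \frac12\Big(1-\frac{M}{N}\Big)K,$$ where the expectation is over the random placement.
   Context: Setting: a server holds a library of $N$ files, each split into $F$ packets (packet $f$ of file $n$ denoted $(n,f)$); $K$ users each have a cache holding $M$ files' worth of packets ($M\le N$). For a cache configuration, $S_{n,f}\subseteq[1:K]$ denotes the set of users whose cache stores packet $(n,f)$. User $k$ requests file $d_k$. Old placement scheme (with $MF/N$ an integer): for every user $k$ and every file $n$, a subset of $MF/N$ of the $F$ packets of file $n$ is chosen uniformly at random and stored in user $k$'s cache; all choices are mutually independent. Delivery scheme and its rate $R^{nd}$: for $k\in[1:K]$ and $T\subseteq[1:K]\setminus\{k\}$, let $V_{k,T}$ be the set of packets $f$ of file $d_k$ with $S_{d_k,f}=T$ exactly. For every nonempty $\mathcal{S}\subseteq[1:K]$ the scheme transmits the XOR of the packet vectors $V_{k,\mathcal{S}\setminus\{k\}}$, $k\in\mathcal{S}$ (shorter vectors zero-padded to the longest). Its normalized number of transmissions is $$R^{nd}(\mathcal{C},\mathbf{d})=\sum_{\emptyset\ne\mathcal{S}\subseteq[1:K]}\frac{\max_{k\in\mathcal{S}}|V_{k,\mathcal{S}\setminus\{k\}}|}{F}.$$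 *)

theory Defs
  imports "HOL-Probability.Probability_Mass_Function"
begin

text \<open>Users are indexed by {..<K}, files by {..<N}, packets by {..<F}.
  A cache configuration C maps user k and file n to the set C k n of packets
  of file n stored in the cache of user k.\<close>

definition old_placement_configs :: "nat \<Rightarrow> nat \<Rightarrow> nat \<Rightarrow> nat \<Rightarrow> (nat \<Rightarrow> nat \<Rightarrow> nat set) set" where
  "old_placement_configs K N F m =
     {C. \<forall>k n. (k < K \<and> n < N \<longrightarrow> C k n \<subseteq> {..<F} \<and> card (C k n) = m)
              \<and> (\<not> (k < K \<and> n < N) \<longrightarrow> C k n = {})}"

text \<open>Old placement scheme: independently for each user and file, a uniformly random
  m-subset of the F packets (m = MF/N). Equivalently: the uniform distribution on all
  such configurations.\<close>
definition old_placement :: "nat \<Rightarrow> nat \<Rightarrow> nat \<Rightarrow> nat \<Rightarrow> (nat \<Rightarrow> nat \<Rightarrow> nat set) pmf" where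
  "old_placement K N F m = pmf_of_set (old_placement_configs K N F m)"

definition users_storing :: "(nat \<Rightarrow> nat \<Rightarrow> nat set) \<Rightarrow> nat \<Rightarrow> nat \<Rightarrow> nat \<Rightarrow> nat set" where
  "users_storing C K n f = {k \<in> {..<K}. f \<in> C k n}"

definition Vset :: "(nat \<Rightarrow> nat \<Rightarrow> nat set) \<Rightarrow> nat \<Rightarrow> nat \<Rightarrow> (nat \<Rightarrow> nat) \<Rightarrow> nat \<Rightarrow> nat set \<Rightarrow> nat set" where
  "Vset C K F d k T = {f \<in> {..<F}. users_storing C K (d k) f = T}"

definition R_nd :: "(nat \<Rightarrow> nat \<Rightarrow> nat set) \<Rightarrow> nat \<Rightarrow> nat \<Rightarrow> (nat \<Rightarrow> nat) \<Rightarrow> real" where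
  "R_nd C K F d =
     (\<Sum>S \<in> {S. S \<subseteq> {..<K} \<and> S \<noteq> {}}.
        real (Max ((\<lambda>k. card (Vset C K F d k (S - {k}))) ` S)) / real F)"

end

theory Submission
  imports Defs
begin

text \<open>For a nonempty group \<open>S\<close> of users put \<open>a k = |V k (S - {k})|\<close>. Since the
  \<open>a k\<close> are natural numbers, the transmission length \<open>max a\<close> is at least
  \<open>\<Sum>k a k - 1/2 \<Sum>k\<noteq>l a k a l\<close>. Summed over all groups, the first sum counts every packet
  of a requested file that its requester has not cached exactly once, so it equals \<open>K (F - m)\<close>
  for every configuration. Because the demands are distinct, the two factors of a product
  \<open>a k a l\<close> concern different files, which are placed independently; hence the expected
  collision term is \<open>F\<^sup>2 K (K - 1) q\<^sup>2 (1 - q)\<^sup>2 (q\<^sup>2 + (1 - q)\<^sup>2)^(K - 2)\<close> with \<open>q = M / N\<close>.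
  As \<open>q\<^sup>2 + (1 - q)\<^sup>2 = 1 - 2 q (1 - q) \<le> exp (- 2 q (1 - q))\<close>, the hypothesis on \<open>F\<close> makes it at
  most half of the main term \<open>K (1 - q)\<close>.\<close>

section \<open>Product structure of the old placement scheme\<close>

definition packet_subsets :: "nat \<Rightarrow> nat \<Rightarrow> nat set set" where
  "packet_subsets F m = {A. A \<subseteq> {..<F} \<and> card A = m}"

definition config_of :: "nat \<Rightarrow> nat \<Rightarrow> (nat \<times> nat \<Rightarrow> nat set) \<Rightarrow> nat \<Rightarrow> nat \<Rightarrow> nat set" where
  "config_of K N g = (\<lambda>k n. if k < K \<and> n < N then g (k, n) else {})"

lemma finite_packet_subsets: "finite (packet_subsets F m)"
  unfolding packet_subsets_def by (rule finite_subset[of _ "Pow {..<F}"]) auto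

lemma card_packet_subsets: "card (packet_subsets F m) = F choose m"
  unfolding packet_subsets_def by (simp add: n_subsets)

lemma old_placement_configs_eq_image:
  "old_placement_configs K N F m =
     config_of K N ` PiE ({..<K} \<times> {..<N}) (\<lambda>_. packet_subsets F m)"
proof (intro equalityI subsetI)
  fix C assume C: "C \<in> old_placement_configs K N F m"
  let ?g = "\<lambda>i. if i \<in> {..<K} \<times> {..<N} then C (fst i) (snd i) else undefined"
  have "C = config_of K N ?g"
    using C by (auto simp: config_of_def old_placement_configs_def fun_eq_iff)
  moreover have "?g \<in> PiE ({..<K} \<times> {..<N}) (\<lambda>_. packet_subsets F m)"
    using C unfolding old_placement_configs_def packet_subsets_def PiE_def extensional_def
    by force
  ultimately show "C \<in> config_of K N ` PiE ({..<K} \<times> {..<N}) (\<lambda>_. packet_subsets F m)"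
    by blast
next
  fix C assume "C \<in> config_of K N ` PiE ({..<K} \<times> {..<N}) (\<lambda>_. packet_subsets F m)"
  then obtain g where "g \<in> PiE ({..<K} \<times> {..<N}) (\<lambda>_. packet_subsets F m)" "C = config_of K N g"
    by blast
  then show "C \<in> old_placement_configs K N F m"
    by (auto simp: old_placement_configs_def config_of_def packet_subsets_def PiE_def Pi_def)
qed

lemma inj_on_config_of:
  "inj_on (config_of K N) (PiE ({..<K} \<times> {..<N}) (\<lambda>_. packet_subsets F m))"
proof (rule inj_onI)
  fix g h
  assume g: "g \<in> PiE ({..<K} \<times> {..<N}) (\<lambda>_. packet_subsets F m)"
    and h: "h \<in> PiE ({..<K} \<times> {..<N}) (\<lambda>_. packet_subsets F m)"
    and eq: "config_of K N g = config_of K N h"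
  show "g = h"
  proof (rule PiE_ext[OF g h])
    fix i assume "i \<in> {..<K} \<times> {..<N}"
    then show "g i = h i"
      using fun_cong[OF fun_cong[OF eq, of "fst i"], of "snd i"]
      by (cases i) (auto simp: config_of_def)
  qed
qed

lemma finite_old_placement_configs: "finite (old_placement_configs K N F m)"
  unfolding old_placement_configs_eq_image
  by (intro finite_imageI finite_PiE) (auto simp: finite_packet_subsets)

lemma old_placement_configs_nonempty:
  assumes "m \<le> F"
  shows "old_placement_configs K N F m \<noteq> {}"
proof -
  have "(\<lambda>k n. if k < K \<and> n < N then {..<m} else {}) \<in> old_placement_configs K N F m"
    using assms unfolding old_placement_configs_def by auto
  then show ?thesis by blast
qed

lemma sum_old_placement_configs_prod:
  fixes h :: "nat \<Rightarrow> nat \<Rightarrow> nat set \<Rightarrow> real"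
  shows "(\<Sum>C\<in>old_placement_configs K N F m. \<Prod>k<K. \<Prod>n<N. h k n (C k n))
       = (\<Prod>k<K. \<Prod>n<N. \<Sum>A\<in>packet_subsets F m. h k n A)"
proof -
  let ?I = "{..<K} \<times> {..<N}"
  have "(\<Prod>k<K. \<Prod>n<N. \<Sum>A\<in>packet_subsets F m. h k n A)
      = (\<Prod>i\<in>?I. \<Sum>A\<in>packet_subsets F m. h (fst i) (snd i) A)"
    by (simp add: prod.cartesian_product split_def)
  also have "\<dots> = (\<Sum>g\<in>PiE ?I (\<lambda>_. packet_subsets F m). \<Prod>i\<in>?I. h (fst i) (snd i) (g i))"
    by (rule prod_sum_PiE) (auto simp: finite_packet_subsets)
  also have "\<dots> = (\<Sum>g\<in>PiE ?I (\<lambda>_. packet_subsets F m).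
                    \<Prod>k<K. \<Prod>n<N. h k n (config_of K N g k n))"
    by (intro sum.cong refl) (simp add: prod.cartesian_product split_def config_of_def)
  also have "\<dots> = (\<Sum>C\<in>old_placement_configs K N F m. \<Prod>k<K. \<Prod>n<N. h k n (C k n))"
    unfolding old_placement_configs_eq_image
    by (rule sum.reindex[OF inj_on_config_of, symmetric, unfolded comp_def])
  finally show ?thesis by simp
qed

lemma card_old_placement_configs:
  "real (card (old_placement_configs K N F m)) = real (card (packet_subsets F m)) ^ (K * N)"
proof -
  have "real (card (old_placement_configs K N F m))
      = (\<Prod>k<K. \<Prod>n<N. \<Sum>A\<in>packet_subsets F m. (1::real))"
    using sum_old_placement_configs_prod[where h = "\<lambda>_ _ _. 1" and K = K and N = N] by simp
  also have "\<dots> = real (card (packet_subsets F m)) ^ (K * N)"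
    by (simp add: power_mult[symmetric] mult.commute)
  finally show ?thesis .
qed

lemma card_packet_subsets_mem:
  assumes f: "f < F"
  shows "card {A \<in> packet_subsets F m. f \<in> A} * F = m * card (packet_subsets F m)"
proof (cases m)
  case 0
  have "A = {}" if "A \<in> packet_subsets F m" for A
    using that 0 finite_subset[of A "{..<F}"] by (auto simp: packet_subsets_def)
  then have "{A \<in> packet_subsets F m. f \<in> A} = {}" by auto
  then have "card {A \<in> packet_subsets F m. f \<in> A} = 0" by (simp only: card.empty)
  then show ?thesis using 0 by simp
next
  case (Suc m')
  obtain F' where F': "F = Suc F'" using f by (cases F) auto
  let ?B = "{B. B \<subseteq> {..<F} - {f} \<and> card B = m'}"
  have eq: "{A \<in> packet_subsets F m. f \<in> A} = insert f ` ?B"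
  proof (intro equalityI subsetI)
    fix A assume A: "A \<in> {A \<in> packet_subsets F m. f \<in> A}"
    then have "finite A" using finite_subset[of A "{..<F}"] by (auto simp: packet_subsets_def)
    then have "A - {f} \<in> ?B" using A Suc by (auto simp: packet_subsets_def)
    moreover have "A = insert f (A - {f})" using A by auto
    ultimately show "A \<in> insert f ` ?B" by blast
  next
    fix A assume "A \<in> insert f ` ?B"
    then obtain B where B: "B \<subseteq> {..<F} - {f}" "card B = m'" "A = insert f B" by blast
    then have "finite B" "f \<notin> B" using finite_subset[of B "{..<F}"] by auto
    then show "A \<in> {A \<in> packet_subsets F m. f \<in> A}"
      using B f Suc by (auto simp: packet_subsets_def)
  qed
  have "inj_on (insert f) ?B" by (rule inj_onI) auto
  then have "card {A \<in> packet_subsets F m. f \<in> A} = F' choose m'"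
    unfolding eq using f F' by (simp add: card_image n_subsets)
  then show ?thesis
    unfolding card_packet_subsets F' Suc using Suc_times_binomial_eq[of F' m']
    by (metis mult.commute)
qed

definition coin_weight :: "real \<Rightarrow> bool \<Rightarrow> real" where
  "coin_weight q b = (if b then q else 1 - q)"

lemma sum_packet_subsets_mem_indicator:
  assumes "f < F"
  shows "(\<Sum>A\<in>packet_subsets F m. if (f \<in> A) = b then 1 else 0 :: real)
      = real (card (packet_subsets F m)) * coin_weight (real m / real F) b"
proof -
  have F0: "real F > 0" using assms by simp
  have mem: "real (card {A \<in> packet_subsets F m. f \<in> A})
      = real m * real (card (packet_subsets F m)) / real F"
    using card_packet_subsets_mem[OF assms, of m] F0 by (simp add: field_simps flip: of_nat_mult)
  have partition: "card (packet_subsets F m)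
      = card {A \<in> packet_subsets F m. f \<in> A} + card {A \<in> packet_subsets F m. f \<notin> A}"
    by (subst card_Un_disjoint[symmetric])
       (auto simp: finite_packet_subsets intro: arg_cong[where f = card])
  have "(\<Sum>A\<in>packet_subsets F m. if (f \<in> A) = b then 1 else 0 :: real)
      = real (card {A \<in> packet_subsets F m. (f \<in> A) = b})"
    by (simp add: sum.If_cases finite_packet_subsets Int_def conj_commute)
  also have "\<dots> = real (card (packet_subsets F m)) * coin_weight (real m / real F) b"
  proof (cases b)
    case True
    then show ?thesis using mem by (simp add: coin_weight_def)
  next
    case False
    then show ?thesis using mem partition F0 by (simp add: coin_weight_def field_simps)
  qed
  finally show ?thesis .
qed

definition storage_indicator ::
    "(nat \<Rightarrow> nat \<Rightarrow> nat set) \<Rightarrow> nat \<Rightarrow> nat \<Rightarrow> nat \<Rightarrow> nat set \<Rightarrow> real" where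
  "storage_indicator C K n f T = (\<Prod>k<K. if (f \<in> C k n) = (k \<in> T) then 1 else 0)"

lemma storage_indicator_eq:
  assumes "T \<subseteq> {..<K}"
  shows "storage_indicator C K n f T = (if users_storing C K n f = T then 1 else 0)"
proof (cases "users_storing C K n f = T")
  case True
  then have "\<forall>k<K. (f \<in> C k n) = (k \<in> T)" using assms by (auto simp: users_storing_def)
  then show ?thesis using True by (simp add: storage_indicator_def)
next
  case False
  then obtain k where "k < K" "(f \<in> C k n) \<noteq> (k \<in> T)"
    using assms by (auto simp: users_storing_def)
  then have "storage_indicator C K n f T = 0"
    unfolding storage_indicator_def by (intro prod_zero) auto
  then show ?thesis using False by simp
qed

lemma card_Vset_eq_sum_storage_indicator:
  assumes "T \<subseteq> {..<K}"
  shows "real (card (Vset C K F d k T)) = (\<Sum>f<F. storage_indicator C K (d k) f T)"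
  unfolding Vset_def storage_indicator_eq[OF assms] by (simp add: sum.If_cases Int_def)

lemma sum_storage_indicator_pair:
  assumes "n1 \<noteq> n2" "n1 < N" "n2 < N" "f1 < F" "f2 < F"
  shows "(\<Sum>C\<in>old_placement_configs K N F m.
            storage_indicator C K n1 f1 T1 * storage_indicator C K n2 f2 T2)
    = real (card (old_placement_configs K N F m)) *
      (\<Prod>k<K. coin_weight (real m / real F) (k \<in> T1) * coin_weight (real m / real F) (k \<in> T2))"
proof -
  define q where "q = real m / real F"
  define c where "c = real (card (packet_subsets F m))"
  define h where "h = (\<lambda>k n A.
      (if n = n1 then (if (f1 \<in> A) = (k \<in> T1) then 1 else 0) else 1) *
      (if n = n2 then (if (f2 \<in> A) = (k \<in> T2) then 1 else 0) else 1) :: real)"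
  have "storage_indicator C K n1 f1 T1 * storage_indicator C K n2 f2 T2
      = (\<Prod>k<K. \<Prod>n<N. h k n (C k n))" for C
    using assms(2,3) unfolding storage_indicator_def h_def prod.distrib by simp
  then have "(\<Sum>C\<in>old_placement_configs K N F m.
                storage_indicator C K n1 f1 T1 * storage_indicator C K n2 f2 T2)
      = (\<Prod>k<K. \<Prod>n<N. \<Sum>A\<in>packet_subsets F m. h k n A)"
    by (simp add: sum_old_placement_configs_prod)
  also have "\<dots> = (\<Prod>k<K. \<Prod>n<N. c * (if n = n1 then coin_weight q (k \<in> T1) else 1)
                                * (if n = n2 then coin_weight q (k \<in> T2) else 1))"
    using sum_packet_subsets_mem_indicator[OF assms(4)]
      sum_packet_subsets_mem_indicator[OF assms(5)] assms(1)
    unfolding h_def c_def q_def by (intro prod.cong refl) auto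
  also have "\<dots> = c ^ (K * N) * (\<Prod>k<K. coin_weight q (k \<in> T1) * coin_weight q (k \<in> T2))"
    using assms(2,3) by (simp add: prod.distrib power_mult[symmetric] mult.commute)
  finally show ?thesis unfolding card_old_placement_configs c_def q_def .
qed

section \<open>A deterministic lower bound on the rate\<close>

lemma Max_ge_sum_minus_pair_products:
  fixes a :: "'a \<Rightarrow> nat"
  assumes fin: "finite S" and ne: "S \<noteq> {}"
  shows "real (Max (a ` S)) \<ge> (\<Sum>k\<in>S. real (a k))
          - 1/2 * (\<Sum>k\<in>S. \<Sum>l\<in>S - {k}. real (a k) * real (a l))"
proof -
  have "Max (a ` S) \<in> a ` S" using fin ne by simp
  then obtain k0 where k0: "k0 \<in> S" "a k0 = Max (a ` S)" by (metis imageE)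
  define P where "P = (\<Sum>k\<in>S. \<Sum>l\<in>S - {k}. real (a k) * real (a l))"
  text \<open>As the values are natural numbers and \<open>a k0\<close> is maximal, \<open>a l \<le> a k0 * a l\<close>;
    the products involving \<open>k0\<close> occur twice in \<open>P\<close>.\<close>
  have small: "real (a l) \<le> real (a k0) * real (a l)" if "l \<in> S" for l
  proof -
    have "a l \<le> a k0" using k0 fin that by simp
    then show ?thesis by (cases "a l = 0") (auto simp: mult_le_cancel_right1)
  qed
  have cross: "(\<Sum>l\<in>S - {k}. real (a k) * real (a l)) \<ge> real (a k) * real (a k0)"
    if "k \<in> S - {k0}" for k
  proof -
    have "(\<Sum>l\<in>S - {k}. real (a k) * real (a l))
        = real (a k) * real (a k0) + (\<Sum>l\<in>S - {k} - {k0}. real (a k) * real (a l))"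
      using that k0 fin by (subst sum.remove[of _ k0]) auto
    moreover have "(\<Sum>l\<in>S - {k} - {k0}. real (a k) * real (a l)) \<ge> 0"
      by (intro sum_nonneg) simp
    ultimately show ?thesis by linarith
  qed
  have "P = (\<Sum>l\<in>S - {k0}. real (a k0) * real (a l))
          + (\<Sum>k\<in>S - {k0}. \<Sum>l\<in>S - {k}. real (a k) * real (a l))"
    unfolding P_def using fin k0 by (simp add: sum.remove)
  moreover have "(\<Sum>k\<in>S - {k0}. real (a k) * real (a k0))
      \<le> (\<Sum>k\<in>S - {k0}. \<Sum>l\<in>S - {k}. real (a k) * real (a l))"
    by (rule sum_mono) (rule cross)
  ultimately have "2 * (\<Sum>l\<in>S - {k0}. real (a k0) * real (a l)) \<le> P"
    by (simp add: mult.commute)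
  moreover have "(\<Sum>l\<in>S - {k0}. real (a l)) \<le> (\<Sum>l\<in>S - {k0}. real (a k0) * real (a l))"
    by (rule sum_mono) (use small in auto)
  moreover have "(\<Sum>k\<in>S. real (a k)) = real (a k0) + (\<Sum>l\<in>S - {k0}. real (a l))"
    using fin k0 by (simp add: sum.remove)
  ultimately show ?thesis using k0 unfolding P_def by linarith
qed

definition user_groups :: "nat \<Rightarrow> nat set set" where
  "user_groups K = {S. S \<subseteq> {..<K} \<and> S \<noteq> {}}"

lemma finite_user_groups: "finite (user_groups K)"
  unfolding user_groups_def by (rule finite_subset[of _ "Pow {..<K}"]) auto

lemma Pow_eq_insert_user_groups: "Pow {..<K} = insert {} (user_groups K)"
  by (auto simp: user_groups_def)

text \<open>A packet \<open>f\<close> of file \<open>d k\<close> not cached by user \<open>k\<close> lies in exactly one of the sets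
  \<open>Vset C K F d k (S - {k})\<close>, namely for \<open>S = insert k (users_storing C K (d k) f)\<close>.\<close>

lemma sum_card_Vset_uncached:
  assumes C: "C \<in> old_placement_configs K N F m" and d: "\<forall>k<K. d k < N"
  shows "(\<Sum>S\<in>user_groups K. \<Sum>k\<in>S. real (card (Vset C K F d k (S - {k}))))
       = real K * (real F - real m)"
proof -
  let ?P = "\<lambda>S k f. k \<in> S \<and> users_storing C K (d k) f = S - {k}"
  have "(\<Sum>S\<in>user_groups K. \<Sum>k\<in>S. real (card (Vset C K F d k (S - {k}))))
      = (\<Sum>S\<in>user_groups K. \<Sum>k<K. \<Sum>f<F. if ?P S k f then 1 else 0)"
  proof (rule sum.cong[OF refl])
    fix S assume "S \<in> user_groups K"
    then have "(\<Sum>k\<in>S. real (card (Vset C K F d k (S - {k}))))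
        = (\<Sum>k<K. if k \<in> S then real (card (Vset C K F d k (S - {k}))) else 0)"
      by (simp add: sum.If_cases user_groups_def Int_absorb1)
    also have "\<dots> = (\<Sum>k<K. \<Sum>f<F. if ?P S k f then 1 else 0)"
      by (intro sum.cong refl) (cases "k \<in> S", simp_all add: Vset_def sum.If_cases Int_def)
    finally show "(\<Sum>k\<in>S. real (card (Vset C K F d k (S - {k}))))
        = (\<Sum>k<K. \<Sum>f<F. if ?P S k f then 1 else 0)" .
  qed
  also have "\<dots> = (\<Sum>k<K. \<Sum>f<F. \<Sum>S\<in>user_groups K. if ?P S k f then 1 else 0)"
    by (subst sum.swap) (simp add: sum.swap[of _ "user_groups K"])
  also have "\<dots> = (\<Sum>k<K. \<Sum>f<F. if f \<in> C k (d k) then 0 else 1)"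
  proof (intro sum.cong refl)
    fix k f assume k: "k \<in> {..<K}"
    let ?U = "users_storing C K (d k) f"
    have "(k \<in> ?U) = (f \<in> C k (d k))" "?U \<subseteq> {..<K}"
      using k by (auto simp: users_storing_def)
    then have "{S \<in> user_groups K. ?P S k f} = (if f \<in> C k (d k) then {} else {insert k ?U})"
      using k by (auto simp: user_groups_def)
    then show "(\<Sum>S\<in>user_groups K. if ?P S k f then 1 else 0)
        = (if f \<in> C k (d k) then 0 else (1::real))"
      using finite_user_groups[of K] by (simp add: sum.If_cases Int_def)
  qed
  also have "\<dots> = (\<Sum>k<K. real F - real m)"
  proof (intro sum.cong refl)
    fix k assume "k \<in> {..<K}"
    then have Ck: "C k (d k) \<subseteq> {..<F}" "card (C k (d k)) = m"
      using C d unfolding old_placement_configs_def by auto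
    then have "card ({..<F} - C k (d k)) = F - m" "m \<le> F"
      using card_mono[OF finite_lessThan Ck(1)] by (auto simp: card_Diff_subset finite_subset)
    then show "(\<Sum>f<F. if f \<in> C k (d k) then 0 else 1::real) = real F - real m"
      by (simp add: sum.If_cases Diff_eq Int_commute of_nat_diff)
  qed
  finally show ?thesis by simp
qed

definition collision_count :: "(nat \<Rightarrow> nat \<Rightarrow> nat set) \<Rightarrow> nat \<Rightarrow> nat \<Rightarrow> (nat \<Rightarrow> nat) \<Rightarrow> real" where
  "collision_count C K F d = (\<Sum>S\<in>user_groups K. \<Sum>k\<in>S. \<Sum>l\<in>S - {k}.
      real (card (Vset C K F d k (S - {k}))) * real (card (Vset C K F d l (S - {l}))))"

lemma R_nd_lower_bound:
  assumes "C \<in> old_placement_configs K N F m" "\<forall>k<K. d k < N" "F > 0"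
  shows "real F * R_nd C K F d \<ge> real K * (real F - real m) - 1/2 * collision_count C K F d"
proof -
  let ?a = "\<lambda>S k. card (Vset C K F d k (S - {k}))"
  have "real F * R_nd C K F d = (\<Sum>S\<in>user_groups K. real (Max (?a S ` S)))"
    using assms(3) unfolding R_nd_def user_groups_def[symmetric] sum_distrib_left by simp
  also have "\<dots> \<ge> (\<Sum>S\<in>user_groups K. (\<Sum>k\<in>S. real (?a S k))
          - 1/2 * (\<Sum>k\<in>S. \<Sum>l\<in>S - {k}. real (?a S k) * real (?a S l)))"
  proof (rule sum_mono)
    fix S assume "S \<in> user_groups K"
    then have "finite S" "S \<noteq> {}"
      using finite_subset[of S "{..<K}"] by (auto simp: user_groups_def)
    from Max_ge_sum_minus_pair_products[OF this, of "?a S"]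
    show "(\<Sum>k\<in>S. real (?a S k)) - 1/2 * (\<Sum>k\<in>S. \<Sum>l\<in>S - {k}. real (?a S k) * real (?a S l))
        \<le> real (Max (?a S ` S))"
      by simp
  qed
  finally show ?thesis
    using sum_card_Vset_uncached[OF assms(1,2)]
    unfolding sum_subtractf collision_count_def sum_distrib_left[symmetric] by simp
qed

section \<open>The expected collision term\<close>

definition collision_weight :: "nat \<Rightarrow> real \<Rightarrow> real" where
  "collision_weight K q = q\<^sup>2 * (1 - q)\<^sup>2 * (q\<^sup>2 + (1 - q)\<^sup>2) ^ (K - 2)"

lemma sum_Pow_prod_if:
  fixes x y :: "'a \<Rightarrow> 'b::comm_semiring_1"
  assumes "finite A"
  shows "(\<Sum>S\<in>Pow A. \<Prod>j\<in>A. if j \<in> S then x j else y j) = (\<Prod>j\<in>A. x j + y j)"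
proof -
  have "(\<Prod>j\<in>A. x j + y j) = (\<Sum>S\<in>Pow A. (\<Prod>j\<in>S. x j) * (\<Prod>j\<in>A - S. y j))"
    by (rule prod_add[OF assms])
  also have "\<dots> = (\<Sum>S\<in>Pow A. \<Prod>j\<in>A. if j \<in> S then x j else y j)"
  proof (rule sum.cong[OF refl])
    fix S assume "S \<in> Pow A"
    then have "A \<inter> S = S" "A \<inter> - S = A - S" by auto
    then show "(\<Prod>j\<in>S. x j) * (\<Prod>j\<in>A - S. y j) = (\<Prod>j\<in>A. if j \<in> S then x j else y j)"
      using assms by (simp add: prod.If_cases)
  qed
  finally show ?thesis by simp
qed

lemma sum_user_groups_containing_pair:
  assumes "k < K" "l < K" "k \<noteq> l"
  shows "(\<Sum>S\<in>user_groups K. if k \<in> S \<and> l \<in> S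
            then \<Prod>j<K. coin_weight q (j \<in> S - {k}) * coin_weight q (j \<in> S - {l}) else 0)
       = collision_weight K q"
proof -
  define x where "x = (\<lambda>j. if j = k \<or> j = l then q * (1 - q) else q\<^sup>2)"
  define y where "y = (\<lambda>j. if j = k \<or> j = l then 0 else (1 - q)\<^sup>2)"
  have term_eq: "(if k \<in> S \<and> l \<in> S
          then \<Prod>j<K. coin_weight q (j \<in> S - {k}) * coin_weight q (j \<in> S - {l}) else 0)
      = (\<Prod>j<K. if j \<in> S then x j else y j)" for S
  proof (cases "k \<in> S \<and> l \<in> S")
    case True
    then have "(\<Prod>j<K. coin_weight q (j \<in> S - {k}) * coin_weight q (j \<in> S - {l}))
        = (\<Prod>j<K. if j \<in> S then x j else y j)"
      using assms(3)
      by (intro prod.cong refl) (auto simp: x_def y_def coin_weight_def power2_eq_square mult.commute)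
    then show ?thesis using True by simp
  next
    case False
    then obtain i where i: "i = k \<or> i = l" "i \<notin> S" by blast
    then have "(if i \<in> S then x i else y i) = 0" by (auto simp: y_def)
    then have "(\<Prod>j<K. if j \<in> S then x j else y j) = 0"
      using i assms(1,2) by (intro prod_zero) auto
    then show ?thesis unfolding if_not_P[OF False] by simp
  qed
  have "y k = 0" by (simp add: y_def)
  then have "(\<Prod>j<K. if j \<in> {} then x j else y j) = 0"
    using assms(1) by (intro prod_zero bexI[of _ k]) auto
  moreover have "{} \<notin> user_groups K" by (simp add: user_groups_def)
  ultimately have "(\<Sum>S\<in>user_groups K. \<Prod>j<K. if j \<in> S then x j else y j)
      = (\<Sum>S\<in>Pow {..<K}. \<Prod>j<K. if j \<in> S then x j else y j)"
    using finite_user_groups[of K] by (simp add: Pow_eq_insert_user_groups)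
  also have "\<dots> = (\<Prod>j<K. x j + y j)" by (rule sum_Pow_prod_if) simp
  also have "\<dots> = (x k + y k) * (x l + y l) * (\<Prod>j\<in>{..<K} - {k} - {l}. x j + y j)"
    using assms by (simp add: prod.remove[of _ k] prod.remove[of _ l])
  also have "(\<Prod>j\<in>{..<K} - {k} - {l}. x j + y j) = (q\<^sup>2 + (1 - q)\<^sup>2) ^ (K - 2)"
    using assms by (simp add: x_def y_def numeral_2_eq_2)
  finally show ?thesis
    unfolding term_eq collision_weight_def using assms(3)
    by (simp add: x_def y_def power2_eq_square)
qed

lemma sum_user_groups_pair_weights:
  "(\<Sum>S\<in>user_groups K. \<Sum>k\<in>S. \<Sum>l\<in>S - {k}.
      \<Prod>j<K. coin_weight q (j \<in> S - {k}) * coin_weight q (j \<in> S - {l}))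
   = real K * (real K - 1) * collision_weight K q"
proof -
  define G where "G = (\<lambda>S k l. \<Prod>j<K. coin_weight q (j \<in> S - {k}) * coin_weight q (j \<in> S - {l}))"
  let ?P = "\<lambda>S k l. k \<in> S \<and> l \<in> S \<and> l \<noteq> k"
  have "(\<Sum>S\<in>user_groups K. \<Sum>k\<in>S. \<Sum>l\<in>S - {k}. G S k l)
      = (\<Sum>S\<in>user_groups K. \<Sum>k<K. \<Sum>l<K. if ?P S k l then G S k l else 0)"
  proof (rule sum.cong[OF refl])
    fix S assume "S \<in> user_groups K"
    then have S: "S \<subseteq> {..<K}" by (simp add: user_groups_def)
    have "(\<Sum>k\<in>S. \<Sum>l\<in>S - {k}. G S k l)
        = (\<Sum>k<K. if k \<in> S then (\<Sum>l\<in>S - {k}. G S k l) else 0)"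
      using S by (simp add: sum.If_cases Int_absorb1)
    also have "\<dots> = (\<Sum>k<K. \<Sum>l<K. if ?P S k l then G S k l else 0)"
    proof (rule sum.cong[OF refl])
      fix k
      have "{..<K} \<inter> {l. l \<in> S \<and> l \<noteq> k} = S - {k}" using S by auto
      then show "(if k \<in> S then (\<Sum>l\<in>S - {k}. G S k l) else 0)
          = (\<Sum>l<K. if ?P S k l then G S k l else 0)"
        by (cases "k \<in> S") (simp_all add: sum.If_cases)
    qed
    finally show "(\<Sum>k\<in>S. \<Sum>l\<in>S - {k}. G S k l)
        = (\<Sum>k<K. \<Sum>l<K. if ?P S k l then G S k l else 0)" .
  qed
  also have "\<dots> = (\<Sum>k<K. \<Sum>l<K. \<Sum>S\<in>user_groups K. if ?P S k l then G S k l else 0)"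
    by (subst sum.swap) (simp add: sum.swap[of _ "user_groups K"])
  also have "\<dots> = (\<Sum>k<K. \<Sum>l<K. if l \<noteq> k then collision_weight K q else 0)"
  proof (intro sum.cong refl)
    fix k l assume "k \<in> {..<K}" "l \<in> {..<K}"
    then show "(\<Sum>S\<in>user_groups K. if ?P S k l then G S k l else 0)
        = (if l \<noteq> k then collision_weight K q else 0)"
      using sum_user_groups_containing_pair[of k K l q] unfolding G_def
      by (cases "l = k") simp_all
  qed
  also have "\<dots> = real K * (real K - 1) * collision_weight K q"
  proof -
    have "{..<K} \<inter> {l. l \<noteq> k} = {..<K} - {k}" for k by auto
    then show ?thesis by (simp add: sum.If_cases of_nat_diff)
  qed
  finally show ?thesis unfolding G_def .
qed

lemma sum_collision_count:
  assumes d: "\<forall>k<K. d k < N" and inj: "inj_on d {..<K}"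
  shows "(\<Sum>C\<in>old_placement_configs K N F m. collision_count C K F d)
    = real (card (old_placement_configs K N F m)) * real F ^ 2 *
      (real K * (real K - 1) * collision_weight K (real m / real F))"
proof -
  define \<Omega> where "\<Omega> = old_placement_configs K N F m"
  define W where "W = real (card \<Omega>)"
  define q where "q = real m / real F"
  have pair: "(\<Sum>C\<in>\<Omega>. real (card (Vset C K F d k (S - {k}))) * real (card (Vset C K F d l (S - {l}))))
      = W * real F ^ 2 * (\<Prod>j<K. coin_weight q (j \<in> S - {k}) * coin_weight q (j \<in> S - {l}))"
    if S: "S \<in> user_groups K" and kl: "k \<in> S" "l \<in> S - {k}" for S k l
  proof -
    have T: "S - {k} \<subseteq> {..<K}" "S - {l} \<subseteq> {..<K}" "k < K" "l < K"
      using S kl by (auto simp: user_groups_def)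
    then have "d k \<noteq> d l" using inj kl by (metis inj_on_def lessThan_iff DiffE singletonI)
    then have "(\<Sum>C\<in>\<Omega>. storage_indicator C K (d k) f (S - {k}) * storage_indicator C K (d l) g (S - {l}))
        = W * (\<Prod>j<K. coin_weight q (j \<in> S - {k}) * coin_weight q (j \<in> S - {l}))"
      if "f < F" "g < F" for f g
      unfolding \<Omega>_def W_def q_def using that d T by (intro sum_storage_indicator_pair) auto
    then have "(\<Sum>f<F. \<Sum>g<F. \<Sum>C\<in>\<Omega>.
          storage_indicator C K (d k) f (S - {k}) * storage_indicator C K (d l) g (S - {l}))
        = W * real F ^ 2 * (\<Prod>j<K. coin_weight q (j \<in> S - {k}) * coin_weight q (j \<in> S - {l}))"
      by (simp add: power2_eq_square)
    moreover have "(\<Sum>C\<in>\<Omega>. real (card (Vset C K F d k (S - {k}))) * real (card (Vset C K F d l (S - {l}))))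
        = (\<Sum>f<F. \<Sum>g<F. \<Sum>C\<in>\<Omega>.
          storage_indicator C K (d k) f (S - {k}) * storage_indicator C K (d l) g (S - {l}))"
      unfolding card_Vset_eq_sum_storage_indicator[OF T(1)] card_Vset_eq_sum_storage_indicator[OF T(2)]
      by (simp add: sum_product) (subst sum.swap, rule sum.cong[OF refl], subst sum.swap, rule refl)
    ultimately show ?thesis by simp
  qed
  have "(\<Sum>C\<in>\<Omega>. collision_count C K F d) = (\<Sum>S\<in>user_groups K. \<Sum>k\<in>S. \<Sum>l\<in>S - {k}. \<Sum>C\<in>\<Omega>.
      real (card (Vset C K F d k (S - {k}))) * real (card (Vset C K F d l (S - {l}))))"
    unfolding collision_count_def
    by (subst sum.swap, rule sum.cong[OF refl], subst sum.swap,
        rule sum.cong[OF refl], subst sum.swap, rule refl)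
  also have "\<dots> = W * real F ^ 2 * (\<Sum>S\<in>user_groups K. \<Sum>k\<in>S. \<Sum>l\<in>S - {k}.
        \<Prod>j<K. coin_weight q (j \<in> S - {k}) * coin_weight q (j \<in> S - {l}))"
    unfolding sum_distrib_left by (intro sum.cong refl pair)
  finally show ?thesis
    unfolding sum_user_groups_pair_weights \<Omega>_def W_def q_def .
qed

lemma expectation_R_nd_ge:
  assumes "\<forall>k<K. d k < N" "inj_on d {..<K}" "F > 0" "m \<le> F"
  shows "measure_pmf.expectation (old_placement K N F m) (\<lambda>C. R_nd C K F d)
    \<ge> real K * (1 - real m / real F)
       - 1/2 * real K * (real F * (real K - 1) * collision_weight K (real m / real F))"
proof -
  define \<Omega> where "\<Omega> = old_placement_configs K N F m"
  define W where "W = real (card \<Omega>)"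
  define c where "c = collision_weight K (real m / real F)"
  have fin: "finite \<Omega>" and ne: "\<Omega> \<noteq> {}"
    unfolding \<Omega>_def using finite_old_placement_configs old_placement_configs_nonempty assms(4)
    by auto
  have W0: "W > 0" using fin ne by (simp add: W_def card_gt_0_iff)
  have F0: "real F > 0" using assms(3) by simp
  have "W * (real K * (real F - real m) - 1/2 * (real F ^ 2 * (real K * (real K - 1) * c)))
      = (\<Sum>C\<in>\<Omega>. real K * (real F - real m) - 1/2 * collision_count C K F d)"
    unfolding sum_subtractf sum_distrib_left[symmetric] \<Omega>_def
      sum_collision_count[OF assms(1,2)]
    by (simp add: W_def \<Omega>_def c_def algebra_simps)
  also have "\<dots> \<le> real F * (\<Sum>C\<in>\<Omega>. R_nd C K F d)"
    unfolding sum_distrib_left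
    by (rule sum_mono) (use R_nd_lower_bound assms in \<open>auto simp: \<Omega>_def\<close>)
  finally have "(real K * (real F - real m) - 1/2 * (real F ^ 2 * (real K * (real K - 1) * c))) / real F
      \<le> (\<Sum>C\<in>\<Omega>. R_nd C K F d) / W"
    using W0 F0 by (simp add: field_simps)
  moreover have "measure_pmf.expectation (old_placement K N F m) (\<lambda>C. R_nd C K F d)
      = (\<Sum>C\<in>\<Omega>. R_nd C K F d) / W"
    unfolding old_placement_def \<Omega>_def[symmetric] W_def
    by (rule integral_pmf_of_set[OF ne fin])
  ultimately show ?thesis
    using F0 by (simp add: c_def field_simps power2_eq_square)
qed

section \<open>Bounding the collision weight\<close>

lemma sum_squares_power_le_exp:
  fixes q :: real
  shows "(q\<^sup>2 + (1 - q)\<^sup>2) ^ n \<le> exp (- 2 * (q * (1 - q)) * real n)"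
proof -
  have "q * (1 - q) \<le> 1/4"
    using zero_le_power2[of "q - 1/2"] by (simp add: power2_eq_square algebra_simps)
  then have "0 \<le> 1 + - 2 * (q * (1 - q))" by simp
  moreover have "q\<^sup>2 + (1 - q)\<^sup>2 = 1 + - 2 * (q * (1 - q))"
    by (simp add: power2_eq_square algebra_simps)
  ultimately have "(q\<^sup>2 + (1 - q)\<^sup>2) ^ n \<le> exp (- 2 * (q * (1 - q))) ^ n"
    by (metis exp_ge_add_one_self power_mono)
  then show ?thesis by (simp add: exp_of_nat_mult[symmetric] mult.commute)
qed

lemma collision_weight_bound:
  fixes q Fr :: real
  assumes q: "0 < q" "q < 1" and K: "K \<ge> 1" and Fr: "0 \<le> Fr"
    and Fb: "Fr \<le> (1 - q) / (2 * real K * q) * exp (2 * (q * (1 - q)) * (real K - 1))"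
  shows "Fr * (real K - 1) * collision_weight K q \<le> 1 - q"
proof (cases "K = 1")
  case True then show ?thesis using q by simp
next
  case False
  then have K2: "real K \<ge> 2" using K by simp
  define p where "p = q * (1 - q)"
  have p: "0 < p" "p \<le> 1/4"
    using q zero_le_power2[of "q - 1/2"] by (auto simp: p_def power2_eq_square algebra_simps)
  have "collision_weight K q \<le> q\<^sup>2 * (1 - q)\<^sup>2 * exp (- 2 * p * (real K - 2))"
    unfolding collision_weight_def p_def
    using sum_squares_power_le_exp[of q "K - 2"] q K2 by (simp add: of_nat_diff)
  then have "Fr * (real K - 1) * collision_weight K q
      \<le> (1 - q) / (2 * real K * q) * exp (2 * p * (real K - 1)) * (real K - 1)
          * (q\<^sup>2 * (1 - q)\<^sup>2 * exp (- 2 * p * (real K - 2)))"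
    using Fb Fr K2 q unfolding p_def
    by (intro mult_mono) (auto simp: collision_weight_def)
  text \<open>The exponentials combine to \<open>exp (2p) \<le> e < 3\<close>, and \<open>p (1 - q) \<le> 1/4\<close>.\<close>
  also have "\<dots> = (1 - q) * (((real K - 1) / real K) * (p * (1 - q)) * exp (2 * p)) / 2"
  proof -
    have "exp (2 * p * (real K - 1)) * exp (- 2 * p * (real K - 2)) = exp (2 * p)"
      by (simp add: exp_add[symmetric] algebra_simps)
    then show ?thesis using q K2 unfolding p_def by (simp add: field_simps power2_eq_square)
  qed
  also have "\<dots> \<le> (1 - q) * (1 * (1/4) * 3) / 2"
  proof -
    have "p * (1 - q) \<le> 1/4" using p q by (smt (verit) mult_le_cancel_left1)
    moreover have "exp (2 * p) \<le> 3"
      using p exp_le order.trans[of "exp (2 * p)" "exp 1" 3] by simp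
    ultimately have "((real K - 1) / real K) * (p * (1 - q)) * exp (2 * p) \<le> 1 * (1/4) * 3"
      using K2 p q by (intro mult_mono) auto
    then show ?thesis using q by (intro divide_right_mono mult_left_mono) auto
  qed
  also have "\<dots> \<le> 1 - q" using q by simp
  finally show ?thesis .
qed

theorem theorem5:
  fixes K N F m :: nat and M :: real and d :: "nat \<Rightarrow> nat"
  assumes "N > K"
    and "F > 0"
    and "0 < M" and "M \<le> real N"
    and "real m = M * real F / real N"
    and "\<forall>k<K. d k < N"
    and "inj_on d {..<K}"
    and "real F \<le> (real N / M) / (2 * real K) * (1 - 1 / (real N / M)) *
           exp (2 * (real K * M / real N) * (1 - (real K * M / real N) / real K) * (1 - 1 / real K))"
  shows "measure_pmf.expectation (old_placement K N F m) (\<lambda>C. R_nd C K F d)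
           \<ge> 1 / 2 * (1 - M / real N) * real K"
proof -
  define q where "q = M / real N"
  have N0: "real N > 0" and F0: "real F > 0" using assms(1,2) by auto
  have q: "0 < q" "q \<le> 1" "q = real m / real F"
    using assms(3-5) N0 F0 by (auto simp: q_def field_simps)
  then have "m \<le> F" using F0 by (simp add: field_simps)
  have K: "K \<ge> 1" using assms(2,8) by (cases K) auto
  have factor: "(real N / M) / (2 * real K) * (1 - 1 / (real N / M)) = (1 - q) / (2 * real K * q)"
    and exponent: "2 * (real K * M / real N) * (1 - (real K * M / real N) / real K) * (1 - 1 / real K)
      = 2 * (q * (1 - q)) * (real K - 1)"
    using assms(3) N0 K by (simp_all add: q_def field_simps)
  have Fb: "real F \<le> (1 - q) / (2 * real K * q) * exp (2 * (q * (1 - q)) * (real K - 1))"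
    using assms(8) unfolding factor exponent .
  then have "q < 1" using q F0 by (cases "q = 1") auto
  from collision_weight_bound[OF q(1) this K _ Fb] F0
  have "real K * (real F * (real K - 1) * collision_weight K q) \<le> real K * (1 - q)"
    by (intro mult_left_mono) auto
  with expectation_R_nd_ge[OF assms(6,7,2) \<open>m \<le> F\<close>] show ?thesis
    unfolding q(3)[symmetric] q_def by argo
qed

end
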